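(* Let $n\ge2$, $x\in\{0,\dots,n-1\}$ and $k:=n+1+x$. Then \[g_n(x):=\mathbb P(I_n=1\mid X=x)=\min\Bigl\{1,\max\Bigl\{0,\frac{V_n(k)}{N(k,n)}\Bigr\}\Bigr\},\] and consequently $\mathbb P(I_n=1)=\sum_{x=0}^{n-1}\binom{n-1}{x}2^{-(n-1)}g_n(x)$.
   Context: Let $\mathcal X=\{A,B,C,D\}$ and let $(X_i)_{i\ge1}$ be the first-order Markov chain on $\mathcal X$ with $\mathbb P(X_1=x)=1/4$ for all $x$ and transitions: from $A$ to $A$ or $C$ w.p. $1/2$ each; from $B$ to $B$ or $D$ w.p. $1/2$ each; from $C$ and from $D$ to each of $A,B,C,D$ w.p. $1/4$. A nonempty string is admissible if all consecutive transitions have positive probability; $\mathcal A$ is the set of admissible nonempty strings; $K(u):=-\log_2\mathbb P(X_1^m=u)$ for $u=x_1^m\in\mathcal A$. $S_k:=\#\{u\in\mathcal A:K(u)=k\}$, $N(k,\ell):=\#\{u\in\mathcal A$ of length $\ell$ with $K(u)=k\}$, $W_{<n}(k):=\sum_{\ell=1}^{n-1}N(k,\ell)$, $V_n(k):=S_k/2-W_{<n}(k)$. Shortlex source code $C$: order nonempty binary strings by length then lexicographically as $b_1,b_2,\dots$; order $\mathcal A$ as $u_1,u_2,\dots$ by increasing $K$, then increasing length, then lexicographically with $A<B<C<D$; set $C(u_j):=b_j$. Let $K_n:=K(X_1^n)$, $L_n:=|C(X_1^n)|$, $I_n:=\mathbf 1\{L_n=K_n-1\}$, and $X:=\#\{i\in\{1,\dots,n-1\}:X_i\in\{C,D\}\}$.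 *)

theory Defs
  imports Complex_Main
begin

datatype sym = A | B | C | D

fun sym_idx :: "sym \<Rightarrow> nat" where
  "sym_idx A = 0" | "sym_idx B = 1" | "sym_idx C = 2" | "sym_idx D = 3"

fun trans_p :: "sym \<Rightarrow> sym \<Rightarrow> real" where
  "trans_p A y = (if y = A \<or> y = C then 1/2 else 0)"
| "trans_p B y = (if y = B \<or> y = D then 1/2 else 0)"
| "trans_p C y = 1/4"
| "trans_p D y = 1/4"

text \<open>P(X_1^m = u), with uniform initial distribution.\<close>
fun prob :: "sym list \<Rightarrow> real" where
  "prob [] = 0"
| "prob [a] = 1/4"
| "prob (a # b # w) = trans_p a b * prob (b # w)"

definition admissible :: "sym list \<Rightarrow> bool" where
  "admissible u \<longleftrightarrow> u \<noteq> [] \<and>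
     (\<forall>i. Suc i < length u \<longrightarrow> trans_p (u ! i) (u ! Suc i) > 0)"

definition K :: "sym list \<Rightarrow> real" where
  "K u = - log 2 (prob u)"

definition S :: "nat \<Rightarrow> nat" where
  "S k = card {u. admissible u \<and> K u = real k}"

definition N :: "nat \<Rightarrow> nat \<Rightarrow> nat" where
  "N k l = card {u. admissible u \<and> length u = l \<and> K u = real k}"

definition W :: "nat \<Rightarrow> nat \<Rightarrow> nat" where
  "W n k = (\<Sum>l = 1..n-1. N k l)"

definition V :: "nat \<Rightarrow> nat \<Rightarrow> real" where
  "V n k = real (S k) / 2 - real (W n k)"

definition sym_lex_less :: "sym list \<Rightarrow> sym list \<Rightarrow> bool" where
  "sym_lex_less u v \<longleftrightarrow> (map sym_idx u, map sym_idx v) \<in> lexord {(a, b). a < b}"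

definition src_less :: "sym list \<Rightarrow> sym list \<Rightarrow> bool" where
  "src_less v u \<longleftrightarrow> K v < K u \<or> (K v = K u \<and> length v < length u)
     \<or> (K v = K u \<and> length v = length u \<and> sym_lex_less v u)"

text \<open>Index j of u in the enumeration u_1, u_2, ... of the admissible strings.\<close>
definition src_rank :: "sym list \<Rightarrow> nat" where
  "src_rank u = card {v. admissible v \<and> src_less v u} + 1"

text \<open>Shortlex order on binary strings (False = 0 < True = 1).\<close>
definition bin_less :: "bool list \<Rightarrow> bool list \<Rightarrow> bool" where
  "bin_less w v \<longleftrightarrow> length w < length v \<or>
     (length w = length v \<and> (w, v) \<in> lexord {(a, b). a < b})"

definition bin_rank :: "bool list \<Rightarrow> nat" where
  "bin_rank w = card {v. v \<noteq> [] \<and> bin_less v w} + 1"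

definition bstr :: "nat \<Rightarrow> bool list" where
  "bstr j = (THE w. w \<noteq> [] \<and> bin_rank w = j)"

definition code :: "sym list \<Rightarrow> bool list" where
  "code u = bstr (src_rank u)"

text \<open>Law of X_1^n: P(X_1^n satisfies E).\<close>
definition Pr :: "nat \<Rightarrow> (sym list \<Rightarrow> bool) \<Rightarrow> real" where
  "Pr n E = (\<Sum>u \<in> {u. length u = n \<and> E u}. prob u)"

definition cond_Pr :: "nat \<Rightarrow> (sym list \<Rightarrow> bool) \<Rightarrow> (sym list \<Rightarrow> bool) \<Rightarrow> real" where
  "cond_Pr n E F = Pr n (\<lambda>u. E u \<and> F u) / Pr n F"

text \<open>I_n = 1 iff L_n = K_n - 1.\<close>
definition Ind :: "sym list \<Rightarrow> bool" where
  "Ind u \<longleftrightarrow> real (length (code u)) = K u - 1"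

text \<open>X = number of i in {1..n-1} with X_i in {C,D}.\<close>
definition Xcnt :: "sym list \<Rightarrow> nat" where
  "Xcnt u = length (filter (\<lambda>s. s = C \<or> s = D) (butlast u))"

definition g :: "nat \<Rightarrow> nat \<Rightarrow> real" where
  "g n x = cond_Pr n Ind (\<lambda>u. Xcnt u = x)"

end

theory Submission
  imports Defs "HOL-Library.List_Lexorder" "HOL-Library.Discrete_Functions"
begin

(*
  Along an admissible string a transition out of A or B has probability 1/2 and one out of
  C or D has probability 1/4, so K(u) = |u| + 1 + X(u), with X(u) the number of C and D
  among all but the last symbol of u.  Thus the self-information of X_1^n is
  k = n + 1 + X, and all admissible strings with the same X are equally likely.  Hence g_n(x)
  is the fraction of the N(k,n) admissible strings of length n and self-information k whose
  codeword has length k - 1.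

  An admissible string w can be extended to the left by exactly one of A, B (raising K by 1)
  and by both C and D (raising K by 2).  This gives S_(m+2) = S_(m+1) + 2 S_m (plus 4 for
  m = 0), hence S_k/2 + S_(k+1)/2 = 2^k and S_k/2 + sum_(i<k) S_i + 2 = 2^k, and likewise
  N(n+1+x, n) = 2^(x+2) binom(n-1, x), which is P(X = x) = binom(n-1, x) 2^-(n-1).

  The index of u in the source order is j = sum_(i<k) S_i + W_(<n)(k) + r + 1, where r is the
  lexicographic rank of u among the N(k,n) strings sharing its length and self-information,
  and b_j has length floor(log2 (j+1)).  Since j + 1 = 2^k - S_k/2 + W_(<n)(k) + r is at
  least 2^(k-1), the codeword has length k - 1 exactly when W_(<n)(k) + r < S_k/2, which
  happens for min(N(k,n), max(0, V_n(k))) of the N(k,n) values of r.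
*)

section \<open>Ranks in finite strict linear orders\<close>

lemma bij_betw_card_predecessors:
  assumes "finite M" "irreflp_on M r" "transp_on M r" "totalp_on M r"
  shows "bij_betw (\<lambda>x. card {y \<in> M. r y x}) M {..<card M}"
proof -
  let ?rank = "\<lambda>x. card {y \<in> M. r y x}"
  have less: "?rank x < ?rank z" if "x \<in> M" "z \<in> M" "r x z" for x z
  proof (rule psubset_card_mono)
    have "{y \<in> M. r y x} \<subseteq> {y \<in> M. r y z}"
      using that by (auto intro: transp_onD[OF assms(3)])
    moreover have "x \<in> {y \<in> M. r y z} - {y \<in> M. r y x}"
      using that irreflp_onD[OF assms(2)] by auto
    ultimately show "{y \<in> M. r y x} \<subset> {y \<in> M. r y z}"
      by blast
  qed (use assms(1) in simp)
  have inj: "inj_on ?rank M"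
  proof (rule inj_onI, rule ccontr)
    fix x z
    assume xz: "x \<in> M" "z \<in> M" "?rank x = ?rank z" "x \<noteq> z"
    then have "r x z \<or> r z x"
      by (intro totalp_onD[OF assms(4)])
    then show False
      using less[of x z] less[of z x] xz by auto
  qed
  have "?rank x < card M" if "x \<in> M" for x
  proof (rule psubset_card_mono)
    show "{y \<in> M. r y x} \<subset> M"
      using that irreflp_onD[OF assms(2)] by auto
  qed (fact assms(1))
  then have "?rank ` M = {..<card M}"
    using inj by (intro card_subset_eq) (auto simp: card_image)
  with inj show ?thesis
    by (simp add: bij_betw_def)
qed

lemma card_rank_less_eq_min:
  assumes "bij_betw f M {..<m}"
  shows "card {x \<in> M. f x < c} = min c m"
proof -
  have inj: "inj_on f {x \<in> M. f x < c}"
    using assms by (auto simp: bij_betw_def intro: inj_on_subset)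
  have surj: "f ` M = {..<m}"
    using assms by (rule bij_betw_imp_surj_on)
  have "f ` {x \<in> M. f x < c} = {..<min c m}"
  proof
    show "f ` {x \<in> M. f x < c} \<subseteq> {..<min c m}"
      using bij_betw_apply[OF assms] by auto
    show "{..<min c m} \<subseteq> f ` {x \<in> M. f x < c}"
    proof
      fix i
      assume i: "i \<in> {..<min c m}"
      then have "i \<in> f ` M"
        using surj by simp
      then obtain x where "x \<in> M" "i = f x"
        by blast
      with i show "i \<in> f ` {x \<in> M. f x < c}"
        by auto
    qed
  qed
  then show ?thesis
    using card_image[OF inj] by simp
qed

section \<open>Self-information along the chain\<close>

lemma UNIV_sym: "(UNIV :: sym set) = {A, B, C, D}"
  using sym.exhaust by blast

instance sym :: finite
  by standard (simp only: UNIV_sym finite.emptyI finite_insert)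

lemma finite_lists_shorter: "finite {v :: 'a :: finite list. length v < l}"
proof -
  have "{v :: 'a list. length v < l} = (\<Union>i<l. {v. length v = i})"
    by auto
  then show ?thesis
    by (simp add: finite_list_length)
qed

lemma admissible_Cons_Cons:
  "admissible (a # b # w) \<longleftrightarrow> 0 < trans_p a b \<and> admissible (b # w)"
  unfolding admissible_def by (auto simp: All_less_Suc2 nth_Cons')

lemma admissible_nonempty: "admissible u \<Longrightarrow> u \<noteq> []"
  by (simp add: admissible_def)

lemma not_admissible_Nil [simp]: "\<not> admissible []"
  by (simp add: admissible_def)

lemma admissible_singleton [simp]: "admissible [a]"
  by (simp add: admissible_def)

definition weight :: "sym list \<Rightarrow> nat" where
  "weight u = length u + 1 + Xcnt u"

lemma weight_singleton [simp]: "weight [a] = 2"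
  by (simp add: weight_def Xcnt_def)

lemma weight_Cons:
  "w \<noteq> [] \<Longrightarrow> weight (a # w) = weight w + (if a = C \<or> a = D then 2 else 1)"
  by (simp add: weight_def Xcnt_def)

lemma length_less_weight: "length u < weight u"
  by (simp add: weight_def)

lemma two_le_weight: "u \<noteq> [] \<Longrightarrow> 2 \<le> weight u"
  by (cases u) (simp_all add: weight_def)

lemma Xcnt_le: "Xcnt u \<le> length u - 1"
  unfolding Xcnt_def by (metis length_butlast length_filter_le)

lemma prob_eq_weight: "prob u = (if admissible u then (1/2) ^ weight u else 0)"
proof (induction u rule: prob.induct)
  case (3 a b w)
  then show ?case
    by (cases a; cases b) (auto simp: admissible_Cons_Cons weight_Cons)
qed (auto simp: admissible_def power2_eq_square)

lemma K_eq_weight: "admissible u \<Longrightarrow> K u = weight u"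
  by (simp add: K_def prob_eq_weight log_nat_power log_divide)

section \<open>Counting admissible strings by prepending a symbol\<close>

definition AB_pred :: "sym list \<Rightarrow> sym" where
  "AB_pred w = (if hd w = A \<or> hd w = C then A else B)"

lemma admissible_Cons_iff:
  assumes "admissible w"
  shows "admissible (a # w) \<longleftrightarrow> a = AB_pred w \<or> a = C \<or> a = D"
proof -
  obtain b w' where "w = b # w'"
    using admissible_nonempty[OF assms] by (cases w) auto
  then show ?thesis
    using assms by (cases a; cases b) (auto simp: admissible_Cons_Cons AB_pred_def)
qed

lemma admissible_weight_Cons_iff:
  assumes "w \<noteq> []"
  shows "admissible (a # w) \<and> weight (a # w) = Suc (Suc m) \<longleftrightarrow>
    admissible w \<and> (a = AB_pred w \<and> weight w = Suc m \<or> (a = C \<or> a = D) \<and> weight w = m)"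
proof -
  have "admissible (a # w) \<Longrightarrow> admissible w"
    using assms by (cases w) (auto simp: admissible_Cons_Cons)
  then show ?thesis
    using assms by (auto simp: admissible_Cons_iff weight_Cons AB_pred_def)
qed

lemma card_extensions:
  assumes "finite X" "finite Y"
  shows "card ((\<lambda>w. AB_pred w # w) ` X \<union> Cons C ` Y \<union> Cons D ` Y) = card X + 2 * card Y"
proof -
  have inj: "inj_on (\<lambda>w. AB_pred w # w) X"
    by (rule inj_onI) simp
  have disj: "(\<lambda>w. AB_pred w # w) ` X \<inter> Cons C ` Y = {}"
    "((\<lambda>w. AB_pred w # w) ` X \<union> Cons C ` Y) \<inter> Cons D ` Y = {}"
    by (auto simp: AB_pred_def split: if_splits)
  show ?thesis
    using assms inj
    by (simp add: card_Un_disjoint[OF _ _ disj(2)] card_Un_disjoint[OF _ _ disj(1)] card_image)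
qed

definition level :: "nat \<Rightarrow> sym list set" where
  "level k = {u. admissible u \<and> weight u = k}"

definition stratum :: "nat \<Rightarrow> nat \<Rightarrow> sym list set" where
  "stratum n k = {u. admissible u \<and> length u = n \<and> weight u = k}"

lemma S_eq_card_level: "S k = card (level k)"
  unfolding S_def level_def by (rule arg_cong[where f = card]) (auto simp: K_eq_weight)

lemma N_eq_card_stratum: "N k n = card (stratum n k)"
  unfolding N_def stratum_def by (rule arg_cong[where f = card]) (auto simp: K_eq_weight)

lemma finite_level: "finite (level k)"
  by (rule finite_subset[OF _ finite_lists_shorter[of k]]) (auto simp: level_def length_less_weight)

lemma finite_stratum: "finite (stratum n k)"
  by (rule finite_subset[OF _ finite_level[of k]]) (auto simp: stratum_def level_def)

lemma level_eq_empty: "k \<le> 1 \<Longrightarrow> level k = {}"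
  using two_le_weight by (force simp: level_def dest: admissible_nonempty)

lemma stratum_eq_empty: "k \<le> n \<Longrightarrow> stratum n k = {}"
  unfolding stratum_def using length_less_weight not_less by blast

lemma level_Suc_Suc:
  "level (Suc (Suc m)) = (if m = 0 then {[A], [B], [C], [D]} else {}) \<union>
     ((\<lambda>w. AB_pred w # w) ` level (Suc m) \<union> Cons C ` level m \<union> Cons D ` level m)"
  (is "?L = ?R")
proof (rule set_eqI)
  fix u
  show "u \<in> ?L \<longleftrightarrow> u \<in> ?R"
  proof (cases u)
    case (Cons a w)
    show ?thesis
    proof (cases "w = []")
      case True
      then show ?thesis using Cons by (cases a) (auto simp: level_def)
    next
      case False
      then show ?thesis
        using Cons admissible_weight_Cons_iff[OF False, of a m] by (auto simp: level_def)
    qed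
  qed (auto simp: level_def admissible_def)
qed

lemma stratum_Suc_Suc:
  "stratum (Suc (Suc n)) (Suc (Suc m)) =
     (\<lambda>w. AB_pred w # w) ` stratum (Suc n) (Suc m) \<union> Cons C ` stratum (Suc n) m \<union>
     Cons D ` stratum (Suc n) m"
  (is "?L = ?R")
proof (rule set_eqI)
  fix u
  show "u \<in> ?L \<longleftrightarrow> u \<in> ?R"
  proof (cases u)
    case (Cons a w)
    show ?thesis
    proof (cases "w = []")
      case False
      then show ?thesis
        using Cons admissible_weight_Cons_iff[OF False, of a m] by (auto simp: stratum_def)
    qed (use Cons in \<open>auto simp: stratum_def\<close>)
  qed (auto simp: stratum_def)
qed

lemma S_Suc_Suc: "S (Suc (Suc m)) = (if m = 0 then 4 else 0) + S (Suc m) + 2 * S m"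
proof -
  have "(if m = 0 then {[A], [B], [C], [D]} else {}) \<inter>
      ((\<lambda>w. AB_pred w # w) ` level (Suc m) \<union> Cons C ` level m \<union> Cons D ` level m) = {}"
    by (auto simp: level_def)
  then show ?thesis
    unfolding S_eq_card_level level_Suc_Suc
    by (simp add: card_Un_disjoint finite_level card_extensions)
qed

fun half_S :: "nat \<Rightarrow> nat" where
  "half_S 0 = 0"
| "half_S (Suc 0) = 0"
| "half_S (Suc (Suc m)) = (if m = 0 then 2 else 0) + half_S (Suc m) + 2 * half_S m"

lemma S_eq_twice_half_S: "S k = 2 * half_S k"
proof (induction k rule: half_S.induct)
  case (3 m)
  then show ?case by (simp add: S_Suc_Suc)
qed (simp_all add: S_eq_card_level level_eq_empty)

lemma half_S_add_half_S_Suc: "1 \<le> k \<Longrightarrow> half_S k + half_S (Suc k) = 2 ^ k"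
proof (induction k rule: nat_induct_at_least)
  case base
  then show ?case by (simp add: numeral_2_eq_2)
next
  case (Suc k)
  then show ?case by simp
qed

lemma sum_S_lessThan: "1 \<le> k \<Longrightarrow> (\<Sum>i<k. S i) + half_S k + 2 = 2 ^ k"
proof (induction k rule: nat_induct_at_least)
  case base
  then show ?case by (simp add: S_eq_twice_half_S)
next
  case (Suc k)
  have "S k = half_S k + half_S k"
    by (simp add: S_eq_twice_half_S)
  then show ?case
    using Suc.IH half_S_add_half_S_Suc[OF Suc.hyps] by simp
qed

lemma half_S_le: "half_S k \<le> 2 ^ (k - 1)"
proof (cases k)
  case (Suc j)
  then show ?thesis
    using half_S_add_half_S_Suc[of j] by (cases j) simp_all
qed simp

lemma N_Suc_eq_binomial: "N (n + 2 + y) (Suc n) = (n choose y) * 2 ^ (y + 2)"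
proof (induction n arbitrary: y)
  case 0
  have "stratum 1 (2 + y) = (if y = 0 then (\<lambda>a. [a]) ` UNIV else {})"
    by (auto simp: stratum_def length_Suc_conv)
  moreover have "card ((\<lambda>a. [a]) ` (UNIV :: sym set)) = 4"
    by (simp add: card_image UNIV_sym)
  ultimately show ?case
    by (simp add: N_eq_card_stratum)
next
  case (Suc n)
  have "N (Suc n + 2 + y) (Suc (Suc n)) = N (n + 2 + y) (Suc n) + 2 * N (n + 1 + y) (Suc n)"
    using stratum_Suc_Suc[of n "Suc n + y"]
    by (simp add: N_eq_card_stratum card_extensions finite_stratum)
  also have "\<dots> = (Suc n choose y) * 2 ^ (y + 2)"
  proof (cases y)
    case 0
    then show ?thesis
      using Suc.IH[of 0] by (simp add: N_eq_card_stratum stratum_eq_empty)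
  next
    case (Suc z)
    then show ?thesis
      using Suc.IH[of y] Suc.IH[of z] by (simp add: add_mult_distrib)
  qed
  finally show ?case .
qed

section \<open>The law of the number of visits to C and D\<close>

lemma Pr_conj_Xcnt_eq:
  "Pr n (\<lambda>u. E u \<and> Xcnt u = x) = card {u \<in> stratum n (n + 1 + x). E u} * (1/2) ^ (n + 1 + x)"
proof -
  have "Pr n (\<lambda>u. E u \<and> Xcnt u = x) = (\<Sum>u \<in> {u \<in> stratum n (n + 1 + x). E u}. prob u)"
    unfolding Pr_def
  proof (rule sum.mono_neutral_right)
    show "finite {u. length u = n \<and> E u \<and> Xcnt u = x}"
      by (rule finite_subset[OF _ finite_list_length[of n]]) auto
  qed (auto simp: prob_eq_weight stratum_def weight_def)
  also have "\<dots> = (\<Sum>u \<in> {u \<in> stratum n (n + 1 + x). E u}. (1/2) ^ (n + 1 + x))"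
    by (rule sum.cong) (auto simp: prob_eq_weight stratum_def)
  finally show ?thesis
    by simp
qed

lemma Pr_Xcnt_eq_binomial: "Pr (Suc n) (\<lambda>u. Xcnt u = y) = (n choose y) * (1/2) ^ n"
proof -
  have "Pr (Suc n) (\<lambda>u. Xcnt u = y) = N (n + 2 + y) (Suc n) * (1/2) ^ (n + 2 + y)"
    using Pr_conj_Xcnt_eq[of "Suc n" "\<lambda>_. True" y] by (simp add: N_eq_card_stratum)
  also have "\<dots> = (n choose y) * ((2 * (1/2)) ^ (y + 2) * (1/2) ^ n)"
    unfolding N_Suc_eq_binomial power_mult_distrib power_add by simp
  finally show ?thesis
    by simp
qed

lemma Pr_eq_sum_Xcnt: "Pr n E = (\<Sum>y = 0..n-1. Pr n (\<lambda>u. E u \<and> Xcnt u = y))"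
proof -
  have "finite {u. length u = n \<and> E u}"
    by (rule finite_subset[OF _ finite_list_length[of n]]) auto
  moreover have "Xcnt ` {u. length u = n \<and> E u} \<subseteq> {0..n-1}"
    using Xcnt_le by auto
  ultimately show ?thesis
    unfolding Pr_def by (simp add: sum.group[symmetric, of _ "{0..n-1}" Xcnt])
qed

lemma Pr_conj_eq_cond_Pr: "Pr n F \<noteq> 0 \<Longrightarrow> Pr n (\<lambda>u. E u \<and> F u) = Pr n F * cond_Pr n E F"
  by (simp add: cond_Pr_def)

section \<open>Lengths of shortlex binary codewords\<close>

definition bin_lex_rank :: "bool list \<Rightarrow> nat" where
  "bin_lex_rank w = card {v. length v = length w \<and> v < w}"

lemma bij_betw_bin_lex_rank: "bij_betw bin_lex_rank {w. length w = l} {..<2 ^ l}"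
proof -
  have "card {w :: bool list. length w = l} = 2 ^ l"
    using card_lists_length_eq[of "UNIV :: bool set" l] by simp
  then have "bij_betw (\<lambda>w. card {v \<in> {w. length w = l}. v < w}) {w :: bool list. length w = l} {..<2 ^ l}"
    using bij_betw_card_predecessors[of "{w :: bool list. length w = l}" "(<)"]
    by (simp add: finite_list_length)
  then show ?thesis
    by (rule bij_betw_cong[THEN iffD1, rotated]) (simp add: bin_lex_rank_def)
qed

lemma card_bool_lists_shorter: "card {v :: bool list. length v < l} = 2 ^ l - 1"
proof -
  have "{v :: bool list. length v < l} = (\<Union>i<l. {v. length v = i})"
    by auto
  also have "card \<dots> = (\<Sum>i<l. card {v :: bool list. length v = i})"
    by (rule card_UN_disjoint) (auto simp: finite_list_length)
  also have "\<dots> = (\<Sum>i<l. 2 ^ i)"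
    using card_lists_length_eq[of "UNIV :: bool set"] by simp
  finally show ?thesis
    by (simp add: lessThan_atLeast0 sum_power2)
qed

lemma bin_rank_eq: "w \<noteq> [] \<Longrightarrow> bin_rank w = 2 ^ length w - 1 + bin_lex_rank w"
proof -
  assume "w \<noteq> []"
  let ?l = "length w"
  have "{v. v \<noteq> [] \<and> bin_less v w} = ({v. length v < ?l} - {[]}) \<union> {v. length v = ?l \<and> v < w}"
    using \<open>w \<noteq> []\<close> by (auto simp: bin_less_def list_less_def)
  moreover have "finite {v :: bool list. length v = ?l \<and> v < w}"
    by (rule finite_subset[OF _ finite_list_length[of ?l]]) auto
  moreover have "({v :: bool list. length v < ?l} - {[]}) \<inter> {v. length v = ?l \<and> v < w} = {}"
    by auto
  ultimately have "card {v. v \<noteq> [] \<and> bin_less v w} =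
      card ({v :: bool list. length v < ?l} - {[]}) + card {v. length v = ?l \<and> v < w}"
    by (simp add: card_Un_disjoint finite_lists_shorter)
  moreover have "card ({v :: bool list. length v < ?l} - {[]}) = 2 ^ ?l - 2"
    using \<open>w \<noteq> []\<close> card_bool_lists_shorter[of ?l]
    by (simp add: card_Diff_singleton finite_lists_shorter)
  moreover have "(2 :: nat) \<le> 2 ^ ?l"
    using \<open>w \<noteq> []\<close> by (cases w) auto
  ultimately show ?thesis
    by (simp add: bin_rank_def bin_lex_rank_def)
qed

lemma length_eq_floor_log_bin_rank: "w \<noteq> [] \<Longrightarrow> length w = floor_log (Suc (bin_rank w))"
proof -
  assume "w \<noteq> []"
  have "bin_lex_rank w < 2 ^ length w"
    using bij_betw_apply[OF bij_betw_bin_lex_rank] by simp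
  moreover have "1 \<le> (2 :: nat) ^ length w"
    by simp
  ultimately show ?thesis
    using \<open>w \<noteq> []\<close> by (intro floor_log_eqI[symmetric]) (simp_all add: bin_rank_eq)
qed

lemma bstr_bin_rank: "w \<noteq> [] \<Longrightarrow> bstr (bin_rank w) = w"
proof -
  assume "w \<noteq> []"
  have "v = w" if "v \<noteq> []" "bin_rank v = bin_rank w" for v
  proof -
    have len: "length v = length w"
      using that \<open>w \<noteq> []\<close> by (simp add: length_eq_floor_log_bin_rank)
    then have "2 ^ length w - 1 + bin_lex_rank v = 2 ^ length w - 1 + bin_lex_rank w"
      using that \<open>w \<noteq> []\<close> by (metis bin_rank_eq)
    then have "bin_lex_rank v = bin_lex_rank w"
      by (simp only: add_left_cancel)
    with len show "v = w"
      using inj_onD[OF bij_betw_imp_inj_on[OF bij_betw_bin_lex_rank[of "length w"]]] by simp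
  qed
  then show ?thesis
    unfolding bstr_def using \<open>w \<noteq> []\<close> by (intro the_equality) auto
qed

lemma ex_bin_rank_eq: "1 \<le> j \<Longrightarrow> \<exists>w. w \<noteq> [] \<and> bin_rank w = j"
proof -
  assume "1 \<le> j"
  let ?l = "floor_log (Suc j)"
  have lower: "2 ^ ?l \<le> Suc j" and upper: "Suc j < 2 * 2 ^ ?l"
    by (simp_all add: floor_log_exp2_le floor_log_exp2_gt)
  have "1 \<le> ?l"
    using upper \<open>1 \<le> j\<close> by (cases ?l) auto
  have "Suc j - 2 ^ ?l \<in> bin_lex_rank ` {w. length w = ?l}"
    using bij_betw_imp_surj_on[OF bij_betw_bin_lex_rank[of ?l]] lower upper by auto
  then obtain w where "Suc j - 2 ^ ?l = bin_lex_rank w" "length w = ?l"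
    by auto
  moreover from this have "w \<noteq> []"
    using \<open>1 \<le> ?l\<close> by auto
  ultimately show ?thesis
    using lower by (intro exI[of _ w]) (simp add: bin_rank_eq)
qed

lemma length_bstr: "1 \<le> j \<Longrightarrow> length (bstr j) = floor_log (Suc j)"
proof -
  assume "1 \<le> j"
  then obtain w where "w \<noteq> []" "bin_rank w = j"
    using ex_bin_rank_eq by blast
  then show ?thesis
    using bstr_bin_rank length_eq_floor_log_bin_rank by auto
qed

section \<open>Rank of a string in the source order\<close>

lemma sym_lex_less_iff: "sym_lex_less u v \<longleftrightarrow> map sym_idx u < map sym_idx v"
  by (simp add: sym_lex_less_def list_less_def)

lemma inj_sym_idx: "inj sym_idx"
proof (rule injI)
  fix a b
  show "sym_idx a = sym_idx b \<Longrightarrow> a = b"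
    by (cases a; cases b) simp_all
qed

lemma strict_linear_order_on_sym_lex_less:
  "irreflp_on M sym_lex_less" "transp_on M sym_lex_less" "totalp_on M sym_lex_less"
  using inj_map_eq_map[OF inj_sym_idx]
  by (auto simp: sym_lex_less_iff irreflp_on_def transp_on_def totalp_on_def not_less
      order.order_iff_strict)

definition lex_rank :: "sym list \<Rightarrow> nat" where
  "lex_rank u = card {v \<in> stratum (length u) (weight u). sym_lex_less v u}"

lemma bij_betw_lex_rank: "bij_betw lex_rank (stratum n k) {..<N k n}"
proof -
  have "bij_betw (\<lambda>u. card {v \<in> stratum n k. sym_lex_less v u}) (stratum n k) {..<N k n}"
    unfolding N_eq_card_stratum
    by (rule bij_betw_card_predecessors[OF finite_stratum strict_linear_order_on_sym_lex_less])
  then show ?thesis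
    by (rule bij_betw_cong[THEN iffD1, rotated]) (simp add: lex_rank_def stratum_def)
qed

lemma card_weight_less: "card {v. admissible v \<and> weight v < k} = (\<Sum>i<k. S i)"
proof -
  have "{v. admissible v \<and> weight v < k} = (\<Union>i<k. level i)"
    by (auto simp: level_def)
  also have "card \<dots> = (\<Sum>i<k. card (level i))"
    by (rule card_UN_disjoint) (use finite_level in \<open>auto simp: level_def\<close>)
  finally show ?thesis
    by (simp add: S_eq_card_level)
qed

lemma card_same_weight_shorter: "card {v. admissible v \<and> weight v = k \<and> length v < n} = W n k"
proof -
  have "{v. admissible v \<and> weight v = k \<and> length v < n} = (\<Union>l \<in> {1..n-1}. stratum l k)"
    by (auto simp: stratum_def Suc_le_eq dest: admissible_nonempty) (cases n; simp)
  also have "card \<dots> = (\<Sum>l = 1..n-1. card (stratum l k))"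
    by (rule card_UN_disjoint) (use finite_stratum in \<open>auto simp: stratum_def\<close>)
  finally show ?thesis
    by (simp add: W_def N_eq_card_stratum)
qed

lemma src_rank_eq:
  assumes "admissible u"
  shows "src_rank u = (\<Sum>i < weight u. S i) + W (length u) (weight u) + lex_rank u + 1"
proof -
  let ?lighter = "{v. admissible v \<and> weight v < weight u}"
  let ?shorter = "{v. admissible v \<and> weight v = weight u \<and> length v < length u}"
  let ?lex = "{v \<in> stratum (length u) (weight u). sym_lex_less v u}"
  have "{v. admissible v \<and> src_less v u} = ?lighter \<union> ?shorter \<union> ?lex"
    using assms by (auto simp: src_less_def K_eq_weight stratum_def)
  moreover have "finite ?lighter"
    by (rule finite_subset[OF _ finite_lists_shorter[of "weight u"]])
      (use length_less_weight in \<open>auto intro: less_trans\<close>)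
  moreover have "finite ?shorter"
    by (rule finite_subset[OF _ finite_level[of "weight u"]]) (auto simp: level_def)
  moreover have "finite ?lex"
    using finite_stratum by simp
  moreover have "?lighter \<inter> ?shorter = {}" "(?lighter \<union> ?shorter) \<inter> ?lex = {}"
    by (auto simp: stratum_def)
  ultimately have "card {v. admissible v \<and> src_less v u} = card ?lighter + card ?shorter + card ?lex"
    by (simp add: card_Un_disjoint)
  then show ?thesis
    by (simp add: src_rank_def card_weight_less card_same_weight_shorter lex_rank_def)
qed

lemma Ind_iff_lex_rank:
  assumes "admissible u"
  shows "Ind u \<longleftrightarrow> W (length u) (weight u) + lex_rank u < half_S (weight u)"
proof -
  let ?k = "weight u" and ?j = "src_rank u" and ?r = "W (length u) (weight u) + lex_rank u"
  have "2 \<le> ?k"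
    using assms by (simp add: two_le_weight admissible_nonempty)
  have j: "Suc ?j + half_S ?k = 2 ^ ?k + ?r"
    using src_rank_eq[OF assms] sum_S_lessThan[of ?k] \<open>2 \<le> ?k\<close> by simp
  have pow: "(2 :: nat) ^ ?k = 2 * 2 ^ (?k - 1)"
    using \<open>2 \<le> ?k\<close> by (simp flip: power_Suc)
  have "Ind u \<longleftrightarrow> length (code u) = ?k - 1"
    using assms \<open>2 \<le> ?k\<close> by (auto simp: Ind_def K_eq_weight)
  also have "\<dots> \<longleftrightarrow> floor_log (Suc ?j) = ?k - 1"
    by (simp add: code_def length_bstr src_rank_def)
  also have "\<dots> \<longleftrightarrow> Suc ?j < 2 ^ ?k"
  proof
    assume "floor_log (Suc ?j) = ?k - 1"
    then show "Suc ?j < 2 ^ ?k"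
      using floor_log_exp2_gt[of "Suc ?j"] pow by simp
  next
    assume "Suc ?j < 2 ^ ?k"
    moreover have "2 ^ (?k - 1) \<le> Suc ?j"
      using j pow half_S_le[of ?k] by linarith
    ultimately show "floor_log (Suc ?j) = ?k - 1"
      using pow by (intro floor_log_eqI) simp_all
  qed
  also have "\<dots> \<longleftrightarrow> ?r < half_S ?k"
    using j by linarith
  finally show ?thesis .
qed

lemma card_Ind_stratum: "card {u \<in> stratum n k. Ind u} = min (half_S k - W n k) (N k n)"
proof -
  have "{u \<in> stratum n k. Ind u} = {u \<in> stratum n k. lex_rank u < half_S k - W n k}"
    by (auto simp: stratum_def Ind_iff_lex_rank)
  then show ?thesis
    using card_rank_less_eq_min[OF bij_betw_lex_rank] by simp
qed

lemma real_min_diff_div_eq_clamp: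
  "real (min (a - b) m) / real m = min 1 (max 0 ((real a - real b) / real m))"
  by (cases "m = 0") (auto simp: min_def max_def field_simps of_nat_diff)

lemma g_eq_clamp: "g n x = min 1 (max 0 (V n (n + 1 + x) / real (N (n + 1 + x) n)))"
proof -
  let ?k = "n + 1 + x"
  have Pr_Xcnt_eq_card: "Pr n (\<lambda>u. Xcnt u = x) = card (stratum n ?k) * (1/2) ^ ?k"
    using Pr_conj_Xcnt_eq[of n "\<lambda>_. True" x] by simp
  have "g n x = card {u \<in> stratum n ?k. Ind u} / card (stratum n ?k)"
    unfolding g_def cond_Pr_def Pr_conj_Xcnt_eq Pr_Xcnt_eq_card
    by (rule nonzero_mult_divide_mult_cancel_right) simp
  also have "\<dots> = min 1 (max 0 ((real (half_S ?k) - real (W n ?k)) / real (N ?k n)))"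
    by (simp add: card_Ind_stratum N_eq_card_stratum[symmetric] real_min_diff_div_eq_clamp)
  also have "real (half_S ?k) - real (W n ?k) = V n ?k"
    by (simp add: V_def S_eq_twice_half_S)
  finally show ?thesis .
qed

theorem mainTheorem8:
  fixes n x :: nat
  assumes "n \<ge> 2" and "x \<le> n - 1"
  defines "k \<equiv> n + 1 + x"
  shows "g n x = min 1 (max 0 (V n k / real (N k n)))
    \<and> Pr n Ind = (\<Sum>y = 0..n-1. real ((n-1) choose y) * (1/2)^(n-1) * g n y)"
proof
  show "g n x = min 1 (max 0 (V n k / real (N k n)))"
    unfolding k_def by (rule g_eq_clamp)
  have "Pr n Ind = (\<Sum>y = 0..n-1. Pr n (\<lambda>u. Ind u \<and> Xcnt u = y))"
    by (rule Pr_eq_sum_Xcnt)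
  also have "\<dots> = (\<Sum>y = 0..n-1. real ((n-1) choose y) * (1/2)^(n-1) * g n y)"
  proof (rule sum.cong)
    fix y
    assume "y \<in> {0..n-1}"
    then have "Pr n (\<lambda>u. Xcnt u = y) = real ((n-1) choose y) * (1/2)^(n-1)"
      and "(n-1) choose y \<noteq> 0"
      using Pr_Xcnt_eq_binomial[of "n-1" y] \<open>n \<ge> 2\<close> by simp_all
    then show "Pr n (\<lambda>u. Ind u \<and> Xcnt u = y) = real ((n-1) choose y) * (1/2)^(n-1) * g n y"
      by (simp add: Pr_conj_eq_cond_Pr g_def)
  qed (rule refl)
  finally show "Pr n Ind = (\<Sum>y = 0..n-1. real ((n-1) choose y) * (1/2)^(n-1) * g n y)" .
qed

end
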